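(* Let $d\in\mathbb{N}$ and $k\in\mathbb{N}$. Suppose that $f\in\mathcal{G}_d$ is log-$k$-affine and that $\operatorname{supp} f\in\mathcal{P}$. Then there exist $\kappa(f)\leq k$, vectors $\alpha_1,\dotsc,\alpha_{\kappa(f)}\in\mathbb{R}^d$, scalars $\beta_1,\dotsc,\beta_{\kappa(f)}\in\mathbb{R}$ and a polyhedral subdivision $E_1,\dotsc,E_{\kappa(f)}$ of $\operatorname{supp} f$ such that $f(x)=\exp(\alpha_j^\top x+\beta_j)$ for all $x\in E_j$ and all $j$, and $\alpha_i\neq\alpha_j$ whenever $i\neq j$. Moreover, the triples $(\alpha_j,\beta_j,E_j)_{j=1}^{\kappa(f)}$ are unique up to reordering. In addition, if $\operatorname{supp} f\in\mathcal{P}^m$ for some $m\in\mathbb{N}\cup\{0\}$, then $E_j\in\mathcal{P}^{k+m-1}$ for all $j$.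
   Context: $\mathcal{G}_d$ is the set of functions $e^{\phi}$ where $\phi:\mathbb{R}^d\to[-\infty,\infty)$ is upper semi-continuous and concave. For $f:\mathbb{R}^d\to\mathbb{R}$, $\operatorname{supp} f:=\{x: f(x)\neq 0\}$. A function $f\in\mathcal{G}_d$ is log-$k$-affine if there exist closed sets $E_1,\dotsc,E_k$ with $\operatorname{supp} f=\bigcup_{j=1}^k E_j$ and $\log f$ affine on each $E_j$. A polyhedral set is an intersection of finitely many closed half-spaces; $\mathbb{R}^d$ itself is regarded as a polyhedral set with 0 facets. A facet of a convex set $E$ is a set $E\cap H$ of affine dimension $\dim(E)-1$, where $H$ is an affine hyperplane supporting $E$. $\mathcal{P}$ denotes the collection of polyhedral subsets of $\mathbb{R}^d$ with non-empty interior, and $\mathcal{P}^m$ those elements of $\mathcal{P}$ with at most $m$ facets. A (polyhedral) subdivision of $P\in\mathcal{P}$ is a finite collection $E_1,\dotsc,E_\ell\in\mathcal{P}$ with $P=\bigcup_j E_j$ and such that $E_i\cap E_j$ is a common face of $E_i$ and $E_j$ for all $i,j$. *)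

theory Defs
  imports "HOL-Analysis.Analysis"
begin

definition usc_ereal :: "('a::topological_space \<Rightarrow> ereal) \<Rightarrow> bool" where
  "usc_ereal \<phi> \<longleftrightarrow> (\<forall>c::real. open {x. \<phi> x < ereal c})"

definition concave_ereal :: "('a::real_vector \<Rightarrow> ereal) \<Rightarrow> bool" where
  "concave_ereal \<phi> \<longleftrightarrow> (\<forall>x y. \<forall>t::real. 0 < t \<and> t < 1 \<longrightarrow>
      ereal t * \<phi> x + ereal (1 - t) * \<phi> y \<le> \<phi> (t *\<^sub>R x + (1 - t) *\<^sub>R y))"

definition G_class :: "('a::euclidean_space \<Rightarrow> real) set" where
  "G_class = {f. \<exists>\<phi> :: 'a \<Rightarrow> ereal. (\<forall>x. \<phi> x < \<infinity>) \<and> usc_ereal \<phi> \<and> concave_ereal \<phi> \<and>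
      (\<forall>x. f x = (if \<phi> x = - \<infinity> then 0 else exp (real_of_ereal (\<phi> x))))}"

definition supp :: "('a \<Rightarrow> real) \<Rightarrow> 'a set" where
  "supp f = {x. f x \<noteq> 0}"

definition log_affine_on :: "('a::euclidean_space \<Rightarrow> real) \<Rightarrow> 'a set \<Rightarrow> bool" where
  "log_affine_on f E \<longleftrightarrow> (\<exists>a b. \<forall>x\<in>E. ln (f x) = a \<bullet> x + b)"

definition log_k_affine :: "nat \<Rightarrow> ('a::euclidean_space \<Rightarrow> real) \<Rightarrow> bool" where
  "log_k_affine k f \<longleftrightarrow> f \<in> G_class \<and>
     (\<exists>E :: nat \<Rightarrow> 'a set. (\<forall>j<k. closed (E j)) \<and> supp f = (\<Union>j<k. E j) \<and>
        (\<forall>j<k. log_affine_on f (E j)))"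

definition is_facet :: "'a::euclidean_space set \<Rightarrow> 'a set \<Rightarrow> bool" where
  "is_facet E F \<longleftrightarrow> (\<exists>a b. a \<noteq> 0 \<and> E \<subseteq> {x. a \<bullet> x \<le> b} \<and> E \<inter> {x. a \<bullet> x = b} \<noteq> {} \<and>
       F = E \<inter> {x. a \<bullet> x = b} \<and> aff_dim F = aff_dim E - 1)"

definition Pcal :: "'a::euclidean_space set set" where
  "Pcal = {E. polyhedron E \<and> interior E \<noteq> {}}"

definition Pcal_m :: "nat \<Rightarrow> 'a::euclidean_space set set" where
  "Pcal_m m = {E. E \<in> Pcal \<and> finite {F. is_facet E F} \<and> card {F. is_facet E F} \<le> m}"

definition subdivision :: "'a::euclidean_space set \<Rightarrow> nat \<Rightarrow> (nat \<Rightarrow> 'a set) \<Rightarrow> bool" where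
  "subdivision P l E \<longleftrightarrow> (\<forall>j<l. E j \<in> Pcal) \<and> P = (\<Union>j<l. E j) \<and>
     (\<forall>i<l. \<forall>j<l. (E i \<inter> E j) face_of (E i) \<and> (E i \<inter> E j) face_of (E j))"

definition affine_rep :: "('a::euclidean_space \<Rightarrow> real) \<Rightarrow> nat \<Rightarrow> (nat \<Rightarrow> 'a) \<Rightarrow> (nat \<Rightarrow> real)
     \<Rightarrow> (nat \<Rightarrow> 'a set) \<Rightarrow> bool" where
  "affine_rep f \<kappa> \<alpha> \<beta> E \<longleftrightarrow> subdivision (supp f) \<kappa> E \<and>
     (\<forall>j<\<kappa>. \<forall>x\<in>E j. f x = exp (\<alpha> j \<bullet> x + \<beta> j)) \<and>
     (\<forall>i<\<kappa>. \<forall>j<\<kappa>. i \<noteq> j \<longrightarrow> \<alpha> i \<noteq> \<alpha> j)"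

end

theory Submission
  imports Defs
begin

text \<open>On the convex set supp f the function \<open>\<psi> = ln f\<close> is concave. If \<open>\<psi>\<close> is affine on a piece
  with nonempty interior, concavity forces \<open>\<psi>\<close> to lie below that affine function on all of supp f;
  and since supp f is the closure of its interior, a Baire-type argument shows that the pieces with
  nonempty interior already cover supp f. Hence \<open>\<psi>\<close> is the minimum of at most k affine functions,
  each attaining the minimum on an open set, so that functions with equal slopes coincide. The
  cells on which a given one of them is minimal are polyhedra, cut out of supp f by at most
  \<open>\<kappa> - 1\<close> further half-spaces, and they form the subdivision. For uniqueness, the interior of a
  piece of any other representation meets the interior of one of our cells, where the two affine
  functions must agree; distinct slopes then force the piece and the cell to coincide.\<close>

lemma finite_closed_cover_meets_interior:
  fixes F :: "'i \<Rightarrow> 'a::topological_space set"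
  assumes "finite I" "\<And>i. i \<in> I \<Longrightarrow> closed (F i)" "open U" "U \<noteq> {}" "U \<subseteq> (\<Union>i\<in>I. F i)"
  shows "\<exists>i\<in>I. interior (F i) \<inter> U \<noteq> {}"
  using assms
proof (induction I arbitrary: U rule: finite_induct)
  case (insert j I)
  show ?case
  proof (cases "U \<subseteq> F j")
    case True
    then have "U \<subseteq> interior (F j)"
      using insert.prems by (simp add: interior_maximal)
    then show ?thesis
      using insert.prems by blast
  next
    case False
    then obtain i where "i \<in> I" "interior (F i) \<inter> (U - F j) \<noteq> {}"
      using insert.IH[of "U - F j"] insert.prems by blast
    then show ?thesis
      by blast
  qed
qed simp

lemma closed_cover_by_members_with_interior:
  fixes F :: "'i \<Rightarrow> 'a::topological_space set"
  assumes "finite I" "\<And>i. i \<in> I \<Longrightarrow> closed (F i)" "S \<subseteq> (\<Union>i\<in>I. F i)"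
    and "S \<subseteq> closure (interior S)"
  shows "S \<subseteq> (\<Union>i\<in>{i\<in>I. interior (F i) \<noteq> {}}. F i)"
proof -
  define K where "K = (\<Union>i\<in>{i\<in>I. interior (F i) \<noteq> {}}. F i)"
  have "closed K"
    unfolding K_def using assms(1,2) by (intro closed_UN) auto
  have "interior S \<subseteq> K"
  proof (rule ccontr)
    assume "\<not> interior S \<subseteq> K"
    then have "interior S - K \<noteq> {}"
      by blast
    moreover have "open (interior S - K)"
      using \<open>closed K\<close> by auto
    moreover have "interior S - K \<subseteq> (\<Union>i\<in>I. F i)"
      using assms(3) by (meson Diff_subset interior_subset subset_trans)
    ultimately obtain i where "i \<in> I" and meets: "interior (F i) \<inter> (interior S - K) \<noteq> {}"
      using finite_closed_cover_meets_interior[OF assms(1,2)] by meson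
    then have "F i \<subseteq> K"
      unfolding K_def by auto
    then show False
      using meets interior_subset by blast
  qed
  then show ?thesis
    using assms(4) \<open>closed K\<close> closure_minimal unfolding K_def by blast
qed

lemma affine_eq_on_open:
  fixes a a' :: "'a::real_inner"
  assumes "open W" "W \<noteq> {}" "\<And>x. x \<in> W \<Longrightarrow> a \<bullet> x + b = a' \<bullet> x + b'"
  shows "a = a' \<and> b = b'"
proof -
  obtain x0 e where x0: "x0 \<in> W" and "e > 0" "ball x0 e \<subseteq> W"
    using assms(1,2) open_contains_ball by blast
  define v where "v = a - a'"
  have "v = 0"
  proof (rule ccontr)
    assume "v \<noteq> 0"
    define t where "t = e / (2 * norm v)"
    have "t > 0"
      using \<open>v \<noteq> 0\<close> \<open>e > 0\<close> by (simp add: t_def)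
    have "dist x0 (x0 + t *\<^sub>R v) = e / 2"
      using \<open>v \<noteq> 0\<close> \<open>e > 0\<close> by (simp add: dist_norm t_def)
    then have "x0 + t *\<^sub>R v \<in> W"
      using \<open>e > 0\<close> \<open>ball x0 e \<subseteq> W\<close> by auto
    from assms(3)[OF this] assms(3)[OF x0] have "t * (v \<bullet> v) = 0"
      by (simp add: v_def algebra_simps inner_diff_left inner_diff_right)
    then show False
      using \<open>t > 0\<close> \<open>v \<noteq> 0\<close> by simp
  qed
  then show ?thesis
    using assms(3)[OF x0] by (simp add: v_def)
qed

lemma concave_on_le_affine_piece:
  fixes \<psi> :: "'a::real_inner \<Rightarrow> real"
  assumes "concave_on S \<psi>" "E \<subseteq> S" "x0 \<in> interior E" "\<And>x. x \<in> E \<Longrightarrow> \<psi> x = a \<bullet> x + b"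
    and "y \<in> S"
  shows "\<psi> y \<le> a \<bullet> y + b"
proof -
  let ?z = "\<lambda>t. (1 - t) *\<^sub>R x0 + t *\<^sub>R y"
  have "(?z \<longlongrightarrow> x0) (at_right 0)"
    by (auto intro!: tendsto_eq_intros)
  then have "\<forall>\<^sub>F t in at_right 0. ?z t \<in> interior E"
    using assms(3) by (simp add: tendsto_def)
  moreover have "\<forall>\<^sub>F t in at_right (0::real). 0 < t" "\<forall>\<^sub>F t in at_right (0::real). t < 1"
    using eventually_at_right_less order_tendstoD(2)[OF tendsto_ident_at zero_less_one] by auto
  ultimately have "\<forall>\<^sub>F t in at_right 0. ?z t \<in> interior E \<and> 0 < t \<and> t < 1"
    by eventually_elim blast
  then obtain t where t: "?z t \<in> E" "0 < t" "t < 1"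
    using eventually_happens'[OF trivial_limit_at_right_real] interior_subset by blast
  have "x0 \<in> E"
    using assms(3) interior_subset by blast
  have "(1 - t) * \<psi> x0 + t * \<psi> y \<le> \<psi> (?z t)"
    using concave_onD[OF assms(1)] t \<open>x0 \<in> E\<close> assms(2,5) by auto
  also have "\<dots> = (1 - t) * (a \<bullet> x0 + b) + t * (a \<bullet> y + b)"
    using assms(4)[OF t(1)] by (simp add: inner_add_right algebra_simps)
  finally show ?thesis
    using assms(4)[OF \<open>x0 \<in> E\<close>] t(2) by simp
qed

lemma G_class_pos:
  assumes "f \<in> G_class" "x \<in> supp f"
  shows "0 < f x"
  using assms by (auto simp: G_class_def supp_def split: if_splits)

lemma concave_on_ln_G_class:
  assumes "f \<in> G_class"
  shows "concave_on (supp f) (\<lambda>x. ln (f x))"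
proof -
  obtain \<phi> :: "'a \<Rightarrow> ereal" where fin: "\<And>x. \<phi> x < \<infinity>" and cc: "concave_ereal \<phi>"
    and f: "\<And>x. f x = (if \<phi> x = - \<infinity> then 0 else exp (real_of_ereal (\<phi> x)))"
    using assms unfolding G_class_def by blast
  have \<phi>_supp: "\<phi> x = (if x \<in> supp f then ereal (ln (f x)) else - \<infinity>)" for x
    using fin[of x] f[of x] by (cases "\<phi> x") (auto simp: supp_def)
  have comb: "(1 - t) *\<^sub>R x + t *\<^sub>R y \<in> supp f \<and>
      (1 - t) * ln (f x) + t * ln (f y) \<le> ln (f ((1 - t) *\<^sub>R x + t *\<^sub>R y))"
    if "x \<in> supp f" "y \<in> supp f" "0 < t" "t < 1" for x y t
  proof -
    have "ereal (1 - t) * \<phi> x + ereal t * \<phi> y \<le> \<phi> ((1 - t) *\<^sub>R x + t *\<^sub>R y)"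
      using cc[unfolded concave_ereal_def, rule_format, of "1 - t" x y] that(3,4) by simp
    then show ?thesis
      using that(1,2) by (simp add: \<phi>_supp split: if_splits)
  qed
  have "convex (supp f)"
    unfolding convex_alt
  proof (intro ballI allI impI)
    fix x y and u :: real
    assume "x \<in> supp f" "y \<in> supp f" "0 \<le> u \<and> u \<le> 1"
    then show "(1 - u) *\<^sub>R x + u *\<^sub>R y \<in> supp f"
      using comb[of x y u] by (cases "u = 0 \<or> u = 1") auto
  qed
  then show ?thesis
    unfolding concave_on_def
  proof (rule convex_onI[rotated])
    fix x y :: 'a and t :: real
    assume "0 < t" "t < 1" "x \<in> supp f" "y \<in> supp f"
    then show "- ln (f ((1 - t) *\<^sub>R x + t *\<^sub>R y)) \<le> (1 - t) * - ln (f x) + t * - ln (f y)"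
      using comb[of x y t] by simp
  qed
qed

definition envelope_cell :: "'a::real_inner set \<Rightarrow> nat \<Rightarrow> (nat \<Rightarrow> 'a) \<Rightarrow> (nat \<Rightarrow> real) \<Rightarrow> nat \<Rightarrow> 'a set"
  where "envelope_cell S \<kappa> \<alpha> \<beta> i = {x \<in> S. \<forall>j<\<kappa>. \<alpha> i \<bullet> x + \<beta> i \<le> \<alpha> j \<bullet> x + \<beta> j}"

lemma envelope_cell_eq:
  "envelope_cell S \<kappa> \<alpha> \<beta> i = S \<inter> (\<Inter>j<\<kappa>. {x. (\<alpha> i - \<alpha> j) \<bullet> x \<le> \<beta> j - \<beta> i})"
  by (auto simp: envelope_cell_def inner_diff_left algebra_simps)

lemma polyhedron_envelope_cell:
  fixes S :: "'a::euclidean_space set"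
  shows "polyhedron S \<Longrightarrow> polyhedron (envelope_cell S \<kappa> \<alpha> \<beta> i)"
  unfolding envelope_cell_eq
  by (intro polyhedron_Int polyhedron_Inter) (auto intro!: polyhedron_halfspace_le)

lemma envelope_cells_cover:
  assumes "0 < \<kappa>"
  shows "S = (\<Union>i<\<kappa>. envelope_cell S \<kappa> \<alpha> \<beta> i)"
proof (intro equalityI subsetI)
  fix x assume "x \<in> S"
  let ?v = "\<lambda>j. \<alpha> j \<bullet> x + \<beta> j"
  have "Min (?v ` {..<\<kappa>}) \<in> ?v ` {..<\<kappa>}"
    using assms by (intro Min_in) auto
  then obtain i where "i < \<kappa>" "?v i = Min (?v ` {..<\<kappa>})"
    by auto
  moreover have "Min (?v ` {..<\<kappa>}) \<le> ?v j" if "j < \<kappa>" for j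
    using that by (intro Min_le) auto
  ultimately have "i < \<kappa>" "\<forall>j<\<kappa>. ?v i \<le> ?v j"
    by auto
  then show "x \<in> (\<Union>i<\<kappa>. envelope_cell S \<kappa> \<alpha> \<beta> i)"
    using \<open>x \<in> S\<close> by (auto simp: envelope_cell_def)
qed (auto simp: envelope_cell_def)

lemma envelope_cell_Int_face_of:
  assumes "convex S" "i < \<kappa>" "j < \<kappa>"
  shows "(envelope_cell S \<kappa> \<alpha> \<beta> i \<inter> envelope_cell S \<kappa> \<alpha> \<beta> j) face_of envelope_cell S \<kappa> \<alpha> \<beta> i"
proof -
  let ?C = "envelope_cell S \<kappa> \<alpha> \<beta>"
  have "?C i \<inter> ?C j = ?C i \<inter> {x. (\<alpha> i - \<alpha> j) \<bullet> x = \<beta> j - \<beta> i}"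
    using assms(2,3) by (fastforce simp: envelope_cell_def inner_diff_left)
  moreover have "convex (?C i)"
    using assms(1) unfolding envelope_cell_eq by (intro convex_Int convex_INT) (auto intro: convex_halfspace_le)
  moreover have "(\<alpha> i - \<alpha> j) \<bullet> x \<le> \<beta> j - \<beta> i" if "x \<in> ?C i" for x
    using that assms(3) by (auto simp: envelope_cell_def inner_diff_left)
  ultimately show ?thesis
    by (simp add: face_of_Int_supporting_hyperplane_le)
qed

lemma subdivision_envelope_cells:
  assumes "polyhedron S" "0 < \<kappa>" "\<And>i. i < \<kappa> \<Longrightarrow> interior (envelope_cell S \<kappa> \<alpha> \<beta> i) \<noteq> {}"
  shows "subdivision S \<kappa> (envelope_cell S \<kappa> \<alpha> \<beta>)"
proof -
  let ?C = "envelope_cell S \<kappa> \<alpha> \<beta>"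
  have "convex S"
    using assms(1) by (rule polyhedron_imp_convex)
  then have "(?C i \<inter> ?C j) face_of ?C i \<and> (?C i \<inter> ?C j) face_of ?C j" if "i < \<kappa>" "j < \<kappa>" for i j
    using envelope_cell_Int_face_of[OF _ that] envelope_cell_Int_face_of[OF _ that(2,1)]
    by (metis Int_commute)
  moreover have "?C i \<in> Pcal" if "i < \<kappa>" for i
    using polyhedron_envelope_cell[OF assms(1)] assms(3)[OF that] by (simp add: Pcal_def)
  ultimately show ?thesis
    unfolding subdivision_def using envelope_cells_cover[OF assms(2)] by blast
qed

lemma is_facet_iff_facet_of:
  fixes E :: "'a::euclidean_space set"
  assumes "polyhedron E"
  shows "is_facet E F \<longleftrightarrow> F facet_of E"
proof
  assume "is_facet E F"
  then obtain a b where "E \<subseteq> {x. a \<bullet> x \<le> b}" "F = E \<inter> {x. a \<bullet> x = b}" "F \<noteq> {}"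
    "aff_dim F = aff_dim E - 1"
    unfolding is_facet_def by blast
  moreover have "F face_of E"
    using calculation(1,2) polyhedron_imp_convex[OF assms]
    by (auto intro: face_of_Int_supporting_hyperplane_le)
  ultimately show "F facet_of E"
    by (simp add: facet_of_def)
next
  assume F: "F facet_of E"
  then obtain a b where "a \<noteq> 0" "E \<subseteq> {x. a \<bullet> x \<le> b}" "F = E \<inter> {x. a \<bullet> x = b}"
    using facet_of_polyhedron[OF assms] by blast
  with F show "is_facet E F"
    unfolding is_facet_def facet_of_def by blast
qed

lemma Pcal_m_iff:
  fixes E :: "'a::euclidean_space set"
  shows "E \<in> Pcal_m m \<longleftrightarrow> polyhedron E \<and> interior E \<noteq> {} \<and> card {F. F facet_of E} \<le> m"
proof (cases "polyhedron E")
  case True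
  then have "{F. is_facet E F} = {F. F facet_of E}"
    using is_facet_iff_facet_of by blast
  then show ?thesis
    using True by (simp add: Pcal_m_def Pcal_def finite_polyhedron_facets)
qed (simp add: Pcal_m_def Pcal_def)

lemma facet_of_Inter_halfspaces:
  fixes P :: "'a::euclidean_space set"
  assumes "finite G" "P = \<Inter>G" "\<And>g. g \<in> G \<Longrightarrow> \<exists>a b. a \<noteq> 0 \<and> g = {x. a \<bullet> x \<le> b}"
    and "interior P \<noteq> {}" "D facet_of P"
  shows "\<exists>g\<in>G. D = P \<inter> frontier g"
proof -
  have aff: "affine hull P = UNIV"
    using assms(4) by (rule affine_hull_nonempty_interior)
  obtain F where F: "F \<subseteq> G \<and> P = \<Inter>F"
    and Fmin: "\<And>F'. F' \<subseteq> G \<and> P = \<Inter>F' \<Longrightarrow> card F \<le> card F'"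
    using ex_has_least_nat[of "\<lambda>F. F \<subseteq> G \<and> P = \<Inter>F" G card] assms(2) by blast
  have "finite F"
    using F assms(1) finite_subset by blast
  have psub: "P \<subset> affine hull P \<inter> \<Inter>F'" if "F' \<subset> F" for F'
  proof -
    have "card F' < card F"
      using psubset_card_mono[OF \<open>finite F\<close> that] .
    then have "P \<noteq> \<Inter>F'"
      using Fmin[of F'] F that by fastforce
    moreover have "P \<subseteq> \<Inter>F'"
      using F that by blast
    ultimately show ?thesis
      using aff by auto
  qed
  have "\<And>h. h \<in> F \<Longrightarrow> \<exists>a b. a \<noteq> 0 \<and> h = {x. a \<bullet> x \<le> b}"
    using assms(3) F by blast
  then obtain a b where ab: "\<And>h. h \<in> F \<Longrightarrow> a h \<noteq> 0 \<and> h = {x. a h \<bullet> x \<le> b h}"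
    by metis
  have "P = affine hull P \<inter> \<Inter>F"
    using F aff by simp
  then have "D facet_of P \<longleftrightarrow> (\<exists>h. h \<in> F \<and> D = P \<inter> {x. a h \<bullet> x = b h})"
    by (rule facet_of_polyhedron_explicit[OF \<open>finite F\<close> _ ab psub])
  then obtain h where "h \<in> F" "D = P \<inter> {x. a h \<bullet> x = b h}"
    using assms(5) by blast
  moreover have "frontier h = {x. a h \<bullet> x = b h}"
    using ab[OF \<open>h \<in> F\<close>] by (metis frontier_halfspace_le)
  ultimately show ?thesis
    using F by blast
qed

lemma polyhedron_Inter_facet_halfspaces:
  fixes S :: "'a::euclidean_space set"
  assumes "polyhedron S" "interior S \<noteq> {}"
  obtains F where "finite F" "S = \<Inter>F" "\<And>h. h \<in> F \<Longrightarrow> \<exists>a b. a \<noteq> 0 \<and> h = {x. a \<bullet> x \<le> b}"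
    "\<And>h. h \<in> F \<Longrightarrow> S \<inter> frontier h facet_of S"
proof -
  have aff: "affine hull S = UNIV"
    using assms(2) by (rule affine_hull_nonempty_interior)
  obtain F where "finite F" and seq: "S = affine hull S \<inter> \<Inter>F"
    and "\<And>h. h \<in> F \<Longrightarrow> \<exists>a b. a \<noteq> 0 \<and> h = {x. a \<bullet> x \<le> b}"
    and Fmin: "\<And>F'. F' \<subset> F \<Longrightarrow> S \<subset> affine hull S \<inter> \<Inter>F'"
    using assms(1) by (simp add: polyhedron_Int_affine_minimal) meson
  moreover obtain a b where ab: "\<And>h. h \<in> F \<Longrightarrow> a h \<noteq> 0 \<and> h = {x. a h \<bullet> x \<le> b h}"
    using calculation(3) by metis
  moreover have "S \<inter> frontier h facet_of S" if "h \<in> F" for h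
  proof -
    have "frontier h = {x. a h \<bullet> x = b h}"
      using ab[OF that] by (metis frontier_halfspace_le)
    then show ?thesis
      using facet_of_polyhedron_explicit[OF \<open>finite F\<close> seq ab Fmin] that by blast
  qed
  ultimately show thesis
    using that aff by simp
qed

lemma facets_envelope_cell_subset:
  fixes S :: "'a::euclidean_space set" and \<alpha> :: "nat \<Rightarrow> 'a" and \<beta> :: "nat \<Rightarrow> real"
    and \<kappa> i :: nat
  defines "C \<equiv> envelope_cell S \<kappa> \<alpha> \<beta> i"
  assumes "polyhedron S" "inj_on \<alpha> {..<\<kappa>}" "i < \<kappa>" "interior C \<noteq> {}"
  shows "{D. D facet_of C} \<subseteq> (\<lambda>E. C \<inter> E) ` {E. E facet_of S} \<union>
           (\<lambda>j. C \<inter> frontier {x. (\<alpha> i - \<alpha> j) \<bullet> x \<le> \<beta> j - \<beta> i}) ` ({..<\<kappa>} - {i})"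
proof -
  define H where "H j = {x. (\<alpha> i - \<alpha> j) \<bullet> x \<le> \<beta> j - \<beta> i}" for j
  define I where "I = {..<\<kappa>} - {i}"
  have "C \<subseteq> S"
    by (auto simp: C_def envelope_cell_def)
  then have "interior S \<noteq> {}"
    using assms(5) interior_mono by blast
  then obtain F where "finite F" and S: "S = \<Inter>F"
    and F: "\<And>h. h \<in> F \<Longrightarrow> \<exists>a b. a \<noteq> 0 \<and> h = {x. a \<bullet> x \<le> b}"
    and facet_S: "\<And>h. h \<in> F \<Longrightarrow> S \<inter> frontier h facet_of S"
    using polyhedron_Inter_facet_halfspaces[OF assms(2) \<open>interior S \<noteq> {}\<close>] by blast
  have "(\<Inter>j<\<kappa>. H j) = \<Inter>(H ` I)"
    by (auto simp: H_def I_def)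
  then have C_eq: "C = \<Inter>(F \<union> H ` I)"
    using S by (simp add: C_def envelope_cell_eq H_def Inter_Un_distrib)
  have "\<exists>a b. a \<noteq> 0 \<and> g = {x. a \<bullet> x \<le> b}" if g: "g \<in> F \<union> H ` I" for g
  proof (cases "g \<in> F")
    case False
    then obtain j where "j < \<kappa>" "j \<noteq> i" "g = H j"
      using g by (auto simp: I_def)
    moreover have "\<alpha> i - \<alpha> j \<noteq> 0"
      using assms(3,4) calculation(1,2) by (auto simp: inj_on_def)
    ultimately show ?thesis
      unfolding H_def by blast
  qed (use F in blast)
  then have facet_C: "\<exists>g\<in>F \<union> H ` I. D = C \<inter> frontier g" if "D facet_of C" for D
    using facet_of_Inter_halfspaces[OF _ C_eq _ assms(5) that] \<open>finite F\<close> by (simp add: I_def)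
  have "{D. D facet_of C} \<subseteq> (\<lambda>E. C \<inter> E) ` {E. E facet_of S} \<union> (\<lambda>j. C \<inter> frontier (H j)) ` I"
  proof
    fix D assume "D \<in> {D. D facet_of C}"
    then obtain g where "g \<in> F \<union> H ` I" "D = C \<inter> frontier g"
      using facet_C by blast
    moreover have "C \<inter> frontier g = C \<inter> (S \<inter> frontier g)"
      using \<open>C \<subseteq> S\<close> by blast
    ultimately show "D \<in> (\<lambda>E. C \<inter> E) ` {E. E facet_of S} \<union> (\<lambda>j. C \<inter> frontier (H j)) ` I"
      using facet_S by blast
  qed
  then show ?thesis
    by (simp only: H_def I_def)
qed

lemma card_facets_envelope_cell_le:
  fixes S :: "'a::euclidean_space set"
  assumes "polyhedron S" "inj_on \<alpha> {..<\<kappa>}" "i < \<kappa>"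
    and "interior (envelope_cell S \<kappa> \<alpha> \<beta> i) \<noteq> {}"
  shows "card {D. D facet_of envelope_cell S \<kappa> \<alpha> \<beta> i} \<le> card {E. E facet_of S} + (\<kappa> - 1)"
proof -
  let ?C = "envelope_cell S \<kappa> \<alpha> \<beta> i"
  let ?I = "{..<\<kappa>} - {i}"
  let ?T = "\<lambda>j. ?C \<inter> frontier {x. (\<alpha> i - \<alpha> j) \<bullet> x \<le> \<beta> j - \<beta> i}"
  have "card {D. D facet_of ?C} \<le> card ((\<lambda>E. ?C \<inter> E) ` {E. E facet_of S}) + card (?T ` ?I)"
    using facets_envelope_cell_subset[OF assms] finite_polyhedron_facets[OF assms(1)]
    by (intro order_trans[OF card_mono card_Un_le]) auto
  also have "\<dots> \<le> card {E. E facet_of S} + card ?I"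
    by (intro add_mono card_image_le finite_polyhedron_facets[OF assms(1)]) simp
  finally show ?thesis
    using assms(3) by simp
qed

lemma Pcal_m_mono: "m \<le> n \<Longrightarrow> Pcal_m m \<subseteq> Pcal_m n"
  by (auto simp: Pcal_m_def)

lemma envelope_cell_in_Pcal_m:
  fixes S :: "'a::euclidean_space set"
  assumes "S \<in> Pcal_m m" "inj_on \<alpha> {..<\<kappa>}" "i < \<kappa>"
    and "interior (envelope_cell S \<kappa> \<alpha> \<beta> i) \<noteq> {}"
  shows "envelope_cell S \<kappa> \<alpha> \<beta> i \<in> Pcal_m (m + \<kappa> - 1)"
proof -
  have "polyhedron S" "card {E. E facet_of S} \<le> m"
    using assms(1) by (simp_all add: Pcal_m_iff)
  then show ?thesis
    using card_facets_envelope_cell_le[OF _ assms(2-4)] polyhedron_envelope_cell assms(3,4)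
    by (fastforce simp: Pcal_m_iff)
qed

lemma lower_envelope_inj_fst:
  fixes \<psi> :: "'a::real_inner \<Rightarrow> real" and L :: "('a \<times> real) set"
  assumes above: "\<And>a b y. (a, b) \<in> L \<Longrightarrow> y \<in> S \<Longrightarrow> \<psi> y \<le> a \<bullet> y + b"
    and tight: "\<And>a b. (a, b) \<in> L \<Longrightarrow> \<exists>E\<subseteq>S. interior E \<noteq> {} \<and> (\<forall>x\<in>E. \<psi> x = a \<bullet> x + b)"
  shows "inj_on fst L"
proof -
  have intercept_le: "b \<le> b'" if ab: "(a, b) \<in> L" "(a, b') \<in> L" for a b b'
  proof -
    obtain E where "E \<subseteq> S" "interior E \<noteq> {}" "\<forall>x\<in>E. \<psi> x = a \<bullet> x + b"
      using tight[OF ab(1)] by blast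
    moreover obtain x where "x \<in> E"
      using \<open>interior E \<noteq> {}\<close> interior_subset by blast
    ultimately show ?thesis
      using above[OF ab(2), of x] by auto
  qed
  show ?thesis
    by (rule inj_onI) (metis antisym intercept_le prod.collapse)
qed

lemma lower_envelope_cells:
  fixes \<psi> :: "'a::real_inner \<Rightarrow> real" and L :: "('a \<times> real) set"
  assumes "finite L"
    and above: "\<And>a b y. (a, b) \<in> L \<Longrightarrow> y \<in> S \<Longrightarrow> \<psi> y \<le> a \<bullet> y + b"
    and attained: "\<And>y. y \<in> S \<Longrightarrow> \<exists>(a, b)\<in>L. \<psi> y = a \<bullet> y + b"
    and tight: "\<And>a b. (a, b) \<in> L \<Longrightarrow> \<exists>E\<subseteq>S. interior E \<noteq> {} \<and> (\<forall>x\<in>E. \<psi> x = a \<bullet> x + b)"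
  obtains \<alpha> \<beta> where "inj_on \<alpha> {..<card L}"
    "\<And>i. i < card L \<Longrightarrow> interior (envelope_cell S (card L) \<alpha> \<beta> i) \<noteq> {}"
    "\<And>i x. i < card L \<Longrightarrow> x \<in> envelope_cell S (card L) \<alpha> \<beta> i \<Longrightarrow> \<psi> x = \<alpha> i \<bullet> x + \<beta> i"
proof -
  obtain e where e: "bij_betw e {..<card L} L"
    using ex_bij_betw_nat_finite[OF assms(1)] by (auto simp: atLeast0LessThan)
  define \<alpha> where "\<alpha> i = fst (e i)" for i
  define \<beta> where "\<beta> i = snd (e i)" for i
  have e_in: "(\<alpha> i, \<beta> i) \<in> L" if "i < card L" for i
    using e that by (auto simp: \<alpha>_def \<beta>_def bij_betw_def)
  have "inj_on fst L"
    using above tight by (rule lower_envelope_inj_fst)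
  then have "inj_on (fst \<circ> e) {..<card L}"
    using e by (simp add: comp_inj_on bij_betw_def)
  then have "inj_on \<alpha> {..<card L}"
    by (simp add: \<alpha>_def[abs_def] o_def)
  moreover have "interior (envelope_cell S (card L) \<alpha> \<beta> i) \<noteq> {}" if i: "i < card L" for i
  proof -
    obtain E where E: "E \<subseteq> S" "interior E \<noteq> {}" "\<forall>x\<in>E. \<psi> x = \<alpha> i \<bullet> x + \<beta> i"
      using tight[OF e_in[OF i]] by blast
    then have "E \<subseteq> envelope_cell S (card L) \<alpha> \<beta> i"
      using above[OF e_in] by (fastforce simp: envelope_cell_def)
    then show ?thesis
      using E(2) interior_mono by blast
  qed
  moreover have "\<psi> x = \<alpha> i \<bullet> x + \<beta> i"
    if i: "i < card L" and x: "x \<in> envelope_cell S (card L) \<alpha> \<beta> i" for i x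
  proof -
    have "x \<in> S" "\<forall>j<card L. \<alpha> i \<bullet> x + \<beta> i \<le> \<alpha> j \<bullet> x + \<beta> j"
      using x by (auto simp: envelope_cell_def)
    moreover obtain a b where "(a, b) \<in> L" "\<psi> x = a \<bullet> x + b"
      using attained[OF \<open>x \<in> S\<close>] by blast
    moreover obtain j where "j < card L" "e j = (a, b)"
      using \<open>(a, b) \<in> L\<close> e unfolding bij_betw_def by (metis imageE lessThan_iff)
    ultimately show ?thesis
      using above[OF e_in[OF i] \<open>x \<in> S\<close>] by (force simp: \<alpha>_def \<beta>_def)
  qed
  ultimately show thesis
    using that by blast
qed

lemma log_k_affineE:
  assumes "log_k_affine k f"
  obtains E a b where "\<And>j. j < k \<Longrightarrow> closed (E j)" "supp f = (\<Union>j<k. E j)"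
    "\<And>j x. j < k \<Longrightarrow> x \<in> E j \<Longrightarrow> ln (f x) = a j \<bullet> x + b j"
proof -
  obtain E where "\<And>j. j < k \<Longrightarrow> closed (E j)" "supp f = (\<Union>j<k. E j)"
    and "\<And>j. j < k \<Longrightarrow> log_affine_on f (E j)"
    using assms unfolding log_k_affine_def by blast
  then show thesis
    using that unfolding log_affine_on_def by metis
qed

lemma log_k_affine_lower_envelope:
  fixes f :: "'a::euclidean_space \<Rightarrow> real"
  assumes "f \<in> G_class" "log_k_affine k f" "interior (supp f) \<noteq> {}"
  obtains L :: "('a \<times> real) set" where "finite L" "card L \<le> k"
    "\<And>a b y. (a, b) \<in> L \<Longrightarrow> y \<in> supp f \<Longrightarrow> ln (f y) \<le> a \<bullet> y + b"
    "\<And>y. y \<in> supp f \<Longrightarrow> \<exists>(a, b)\<in>L. ln (f y) = a \<bullet> y + b"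
    "\<And>a b. (a, b) \<in> L \<Longrightarrow> \<exists>E\<subseteq>supp f. interior E \<noteq> {} \<and> (\<forall>x\<in>E. ln (f x) = a \<bullet> x + b)"
proof -
  obtain E a b where closed: "\<And>j. j < k \<Longrightarrow> closed (E j)" and cover: "supp f = (\<Union>j<k. E j)"
    and ab: "\<And>j x. j < k \<Longrightarrow> x \<in> E j \<Longrightarrow> ln (f x) = a j \<bullet> x + b j"
    using log_k_affineE[OF assms(2)] by blast
  define J where "J = {j \<in> {..<k}. interior (E j) \<noteq> {}}"
  have concave: "concave_on (supp f) (\<lambda>x. ln (f x))"
    using assms(1) by (rule concave_on_ln_G_class)
  then have "supp f \<subseteq> closure (interior (supp f))"
    using convex_closure_interior[OF _ assms(3)] closure_subset by (auto simp: concave_on_iff)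
  then have interior_cover: "supp f \<subseteq> (\<Union>j\<in>J. E j)"
    unfolding J_def using closed_cover_by_members_with_interior[of "{..<k}" E] closed cover by auto
  define L where "L = (\<lambda>j. (a j, b j)) ` J"
  have "J \<subseteq> {..<k}"
    by (auto simp: J_def)
  then have "finite J" "card J \<le> k"
    using finite_subset card_mono[of "{..<k}" J] by auto
  then have "finite L" "card L \<le> k"
    unfolding L_def using card_image_le[of J "\<lambda>j. (a j, b j)"] by auto
  moreover have "ln (f y) \<le> a' \<bullet> y + b'" if "(a', b') \<in> L" "y \<in> supp f" for a' b' y
  proof -
    obtain j where "j \<in> J" "a' = a j" "b' = b j"
      using \<open>(a', b') \<in> L\<close> by (auto simp: L_def)
    then obtain x0 where "j < k" "x0 \<in> interior (E j)"
      by (auto simp: J_def)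
    moreover have "E j \<subseteq> supp f"
      using cover \<open>j < k\<close> by blast
    ultimately show ?thesis
      using concave_on_le_affine_piece[OF concave _ _ ab \<open>y \<in> supp f\<close>] \<open>a' = a j\<close> \<open>b' = b j\<close>
      by blast
  qed
  moreover have "\<exists>(a', b')\<in>L. ln (f y) = a' \<bullet> y + b'" if "y \<in> supp f" for y
  proof -
    obtain j where "j \<in> J" "y \<in> E j"
      using interior_cover \<open>y \<in> supp f\<close> by blast
    then show ?thesis
      using ab[of j y] by (auto simp: L_def J_def)
  qed
  moreover have "\<exists>E'\<subseteq>supp f. interior E' \<noteq> {} \<and> (\<forall>x\<in>E'. ln (f x) = a' \<bullet> x + b')"
    if "(a', b') \<in> L" for a' b'
  proof -
    obtain j where "j \<in> J" "a' = a j" "b' = b j"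
      using \<open>(a', b') \<in> L\<close> by (auto simp: L_def)
    then show ?thesis
      using ab[of j] cover by (intro exI[of _ "E j"]) (auto simp: J_def)
  qed
  ultimately show ?thesis
    using that by blast
qed


lemma affine_rep_piece:
  assumes "affine_rep f \<kappa> \<alpha> \<beta> E" "j < \<kappa>"
  shows "closed (E j)" "convex (E j)" "interior (E j) \<noteq> {}" "E j \<subseteq> supp f"
    and "\<And>x. x \<in> E j \<Longrightarrow> f x = exp (\<alpha> j \<bullet> x + \<beta> j)"
proof -
  have "E j \<in> Pcal" "supp f = (\<Union>i<\<kappa>. E i)" "\<forall>x\<in>E j. f x = exp (\<alpha> j \<bullet> x + \<beta> j)"
    using assms unfolding affine_rep_def subdivision_def by blast+
  then show "closed (E j)" "convex (E j)" "interior (E j) \<noteq> {}" "E j \<subseteq> supp f"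
    and "\<And>x. x \<in> E j \<Longrightarrow> f x = exp (\<alpha> j \<bullet> x + \<beta> j)"
    using assms(2) by (auto simp: Pcal_def polyhedron_imp_closed polyhedron_imp_convex)
qed

lemma affine_rep_slopes_inj: "affine_rep f \<kappa> \<alpha> \<beta> E \<Longrightarrow> inj_on \<alpha> {..<\<kappa>}"
  by (auto simp: affine_rep_def inj_on_def)

lemma affine_rep_matches_on_open:
  assumes R: "affine_rep f \<kappa> \<alpha> \<beta> E" and "open U" "U \<noteq> {}" "U \<subseteq> supp f"
    and U: "\<And>x. x \<in> U \<Longrightarrow> f x = exp (a \<bullet> x + b)"
  obtains i where "i < \<kappa>" "\<alpha> i = a" "\<beta> i = b" "interior (E i) \<inter> U \<noteq> {}"
proof -
  have "supp f = (\<Union>j<\<kappa>. E j)"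
    using R by (simp add: affine_rep_def subdivision_def)
  then obtain i where "i \<in> {..<\<kappa>}" and meets: "interior (E i) \<inter> U \<noteq> {}"
    using finite_closed_cover_meets_interior[of "{..<\<kappa>}" E U] affine_rep_piece(1)[OF R] assms(2-4)
    by auto
  moreover have "\<alpha> i = a \<and> \<beta> i = b"
  proof (rule affine_eq_on_open)
    show "open (interior (E i) \<inter> U)"
      using \<open>open U\<close> by auto
    fix x assume "x \<in> interior (E i) \<inter> U"
    then have "exp (\<alpha> i \<bullet> x + \<beta> i) = exp (a \<bullet> x + b)"
      using affine_rep_piece(5)[OF R] \<open>i \<in> {..<\<kappa>}\<close> U interior_subset by fastforce
    then show "\<alpha> i \<bullet> x + \<beta> i = a \<bullet> x + b"
      by simp
  qed (rule meets)
  ultimately show thesis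
    using that by blast
qed

lemma affine_rep_piece_subset:
  assumes R: "affine_rep f \<kappa> \<alpha> \<beta> E" and R': "affine_rep f \<kappa>' \<alpha>' \<beta>' E'"
    and "i < \<kappa>" "j < \<kappa>'" "\<alpha> i = \<alpha>' j" "\<beta> i = \<beta>' j"
  shows "E' j \<subseteq> E i"
proof -
  have "interior (E' j) \<subseteq> E i"
  proof (rule ccontr)
    assume "\<not> interior (E' j) \<subseteq> E i"
    then have ne: "interior (E' j) - E i \<noteq> {}"
      by blast
    have op: "open (interior (E' j) - E i)"
      using affine_rep_piece(1)[OF R \<open>i < \<kappa>\<close>] by auto
    have sub: "interior (E' j) - E i \<subseteq> supp f"
      using affine_rep_piece(4)[OF R' \<open>j < \<kappa>'\<close>] interior_subset by blast
    have val: "f x = exp (\<alpha>' j \<bullet> x + \<beta>' j)" if "x \<in> interior (E' j) - E i" for x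
      using affine_rep_piece(5)[OF R' \<open>j < \<kappa>'\<close>] that interior_subset by blast
    obtain l where "l < \<kappa>" "\<alpha> l = \<alpha>' j" "interior (E l) \<inter> (interior (E' j) - E i) \<noteq> {}"
      by (rule affine_rep_matches_on_open[OF R op ne sub val])
    moreover have "l = i"
      using affine_rep_slopes_inj[OF R] calculation(1,2) assms(3,5) by (auto simp: inj_on_def)
    ultimately show False
      using interior_subset by blast
  qed
  then have "closure (interior (E' j)) \<subseteq> E i"
    using affine_rep_piece(1)[OF R \<open>i < \<kappa>\<close>] by (simp add: closure_minimal)
  then show ?thesis
    using convex_closure_interior affine_rep_piece(2,3)[OF R' \<open>j < \<kappa>'\<close>] closure_subset by blast
qed

lemma affine_rep_piece_unique:
  assumes R: "affine_rep f \<kappa> \<alpha> \<beta> E" and R': "affine_rep f \<kappa>' \<alpha>' \<beta>' E'" and "j < \<kappa>'"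
  obtains i where "i < \<kappa>" "\<alpha> i = \<alpha>' j" "\<beta> i = \<beta>' j" "E i = E' j"
proof -
  have op: "open (interior (E' j))" and ne: "interior (E' j) \<noteq> {}"
    and sub: "interior (E' j) \<subseteq> supp f"
    using affine_rep_piece(3,4)[OF R' \<open>j < \<kappa>'\<close>] interior_subset by auto
  have val: "f x = exp (\<alpha>' j \<bullet> x + \<beta>' j)" if "x \<in> interior (E' j)" for x
    using affine_rep_piece(5)[OF R' \<open>j < \<kappa>'\<close>] that interior_subset by blast
  obtain i where "i < \<kappa>" "\<alpha> i = \<alpha>' j" "\<beta> i = \<beta>' j"
    by (rule affine_rep_matches_on_open[OF R op ne sub val])
  moreover have "E i = E' j"
    using affine_rep_piece_subset[OF R R' \<open>i < \<kappa>\<close> \<open>j < \<kappa>'\<close>]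
      affine_rep_piece_subset[OF R' R \<open>j < \<kappa>'\<close> \<open>i < \<kappa>\<close>] calculation(2,3) by auto
  ultimately show thesis
    using that by blast
qed

lemma affine_rep_unique:
  assumes R: "affine_rep f \<kappa> \<alpha> \<beta> E" and R': "affine_rep f \<kappa>' \<alpha>' \<beta>' E'"
  shows "\<kappa>' = \<kappa> \<and> (\<exists>\<sigma>. bij_betw \<sigma> {..<\<kappa>} {..<\<kappa>'} \<and>
           (\<forall>j<\<kappa>. \<alpha>' (\<sigma> j) = \<alpha> j \<and> \<beta>' (\<sigma> j) = \<beta> j \<and> E' (\<sigma> j) = E j))"
proof -
  define \<sigma> where "\<sigma> j = (SOME i. i < \<kappa>' \<and> \<alpha>' i = \<alpha> j \<and> \<beta>' i = \<beta> j \<and> E' i = E j)" for j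
  have \<sigma>: "\<sigma> j < \<kappa>' \<and> \<alpha>' (\<sigma> j) = \<alpha> j \<and> \<beta>' (\<sigma> j) = \<beta> j \<and> E' (\<sigma> j) = E j" if j: "j < \<kappa>" for j
  proof -
    obtain i where "i < \<kappa>'" "\<alpha>' i = \<alpha> j" "\<beta>' i = \<beta> j" "E' i = E j"
      by (rule affine_rep_piece_unique[OF R' R j])
    then have "\<exists>i. i < \<kappa>' \<and> \<alpha>' i = \<alpha> j \<and> \<beta>' i = \<beta> j \<and> E' i = E j"
      by blast
    then show ?thesis
      unfolding \<sigma>_def by (rule someI_ex)
  qed
  have "inj_on \<sigma> {..<\<kappa>}"
  proof (rule inj_onI)
    fix i j assume "i \<in> {..<\<kappa>}" "j \<in> {..<\<kappa>}" "\<sigma> i = \<sigma> j"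
    then have "\<alpha> i = \<alpha> j"
      using \<sigma>[of i] \<sigma>[of j] by auto
    then show "i = j"
      using affine_rep_slopes_inj[OF R] \<open>i \<in> {..<\<kappa>}\<close> \<open>j \<in> {..<\<kappa>}\<close> by (simp add: inj_on_def)
  qed
  moreover have "\<sigma> ` {..<\<kappa>} = {..<\<kappa>'}"
  proof (intro equalityI subsetI)
    fix j assume "j \<in> {..<\<kappa>'}"
    then have "j < \<kappa>'"
      by simp
    then obtain i where "i < \<kappa>" "\<alpha> i = \<alpha>' j"
      by (rule affine_rep_piece_unique[OF R R'])
    then have "\<sigma> i = j"
      using \<sigma>[OF \<open>i < \<kappa>\<close>] affine_rep_slopes_inj[OF R'] \<open>j < \<kappa>'\<close> by (simp add: inj_on_def)
    then show "j \<in> \<sigma> ` {..<\<kappa>}"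
      using \<open>i < \<kappa>\<close> by blast
  qed (use \<sigma> in auto)
  ultimately have "bij_betw \<sigma> {..<\<kappa>} {..<\<kappa>'}"
    by (simp add: bij_betw_def)
  moreover have "\<kappa>' = \<kappa>"
    using bij_betw_same_card[OF calculation] by simp
  ultimately show ?thesis
    using \<sigma> by blast
qed

lemma log_k_affine_envelope_rep:
  fixes f :: "'a::euclidean_space \<Rightarrow> real"
  assumes "f \<in> G_class" "log_k_affine k f" "supp f \<in> Pcal"
  obtains \<kappa> \<alpha> \<beta> where "\<kappa> \<le> k" "affine_rep f \<kappa> \<alpha> \<beta> (envelope_cell (supp f) \<kappa> \<alpha> \<beta>)"
proof -
  have S: "polyhedron (supp f)" "interior (supp f) \<noteq> {}"
    using assms(3) by (auto simp: Pcal_def)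
  obtain L where L: "finite L" "card L \<le> k"
    and above: "\<And>a b y. (a, b) \<in> L \<Longrightarrow> y \<in> supp f \<Longrightarrow> ln (f y) \<le> a \<bullet> y + b"
    and attained: "\<And>y. y \<in> supp f \<Longrightarrow> \<exists>(a, b)\<in>L. ln (f y) = a \<bullet> y + b"
    and tight: "\<And>a b. (a, b) \<in> L \<Longrightarrow> \<exists>E\<subseteq>supp f. interior E \<noteq> {} \<and> (\<forall>x\<in>E. ln (f x) = a \<bullet> x + b)"
    using log_k_affine_lower_envelope[OF assms(1,2) S(2)] by blast
  obtain \<alpha> \<beta> where inj: "inj_on \<alpha> {..<card L}"
    and cell_interior: "\<And>i. i < card L \<Longrightarrow> interior (envelope_cell (supp f) (card L) \<alpha> \<beta> i) \<noteq> {}"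
    and ln_f: "\<And>i x. i < card L \<Longrightarrow> x \<in> envelope_cell (supp f) (card L) \<alpha> \<beta> i \<Longrightarrow>
                 ln (f x) = \<alpha> i \<bullet> x + \<beta> i"
    using lower_envelope_cells[OF L(1) above attained tight] by blast
  let ?C = "envelope_cell (supp f) (card L) \<alpha> \<beta>"
  have "L \<noteq> {}"
    using attained S(2) interior_subset by fastforce
  then have "subdivision (supp f) (card L) ?C"
    using subdivision_envelope_cells[OF S(1) _ cell_interior] L(1) by (simp add: card_gt_0_iff)
  moreover have "f x = exp (\<alpha> i \<bullet> x + \<beta> i)" if "i < card L" "x \<in> ?C i" for i x
  proof -
    have "0 < f x"
      using G_class_pos[OF assms(1)] that(2) by (simp add: envelope_cell_def)
    then show ?thesis
      using ln_f[OF that] by (metis exp_ln)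
  qed
  ultimately have "affine_rep f (card L) \<alpha> \<beta> ?C"
    using inj by (auto simp: affine_rep_def inj_on_def)
  then show thesis
    using that L(2) by blast
qed

theorem proposition1:
  fixes f :: "'a::euclidean_space \<Rightarrow> real" and k :: nat
  assumes "f \<in> G_class" and "log_k_affine k f" and "supp f \<in> Pcal"
  shows "\<exists>\<kappa> \<alpha> \<beta> E. \<kappa> \<le> k \<and> affine_rep f \<kappa> \<alpha> \<beta> E \<and>
     (\<forall>\<kappa>' \<alpha>' \<beta>' E'. affine_rep f \<kappa>' \<alpha>' \<beta>' E' \<longrightarrow>
        \<kappa>' = \<kappa> \<and> (\<exists>\<sigma>. bij_betw \<sigma> {..<\<kappa>} {..<\<kappa>'} \<and>
          (\<forall>j<\<kappa>. \<alpha>' (\<sigma> j) = \<alpha> j \<and> \<beta>' (\<sigma> j) = \<beta> j \<and> E' (\<sigma> j) = E j))) \<and>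
     (\<forall>m::nat. supp f \<in> Pcal_m m \<longrightarrow> (\<forall>j<\<kappa>. E j \<in> Pcal_m (k + m - 1)))"
proof -
  obtain \<kappa> \<alpha> \<beta> where "\<kappa> \<le> k" and rep: "affine_rep f \<kappa> \<alpha> \<beta> (envelope_cell (supp f) \<kappa> \<alpha> \<beta>)"
    using log_k_affine_envelope_rep[OF assms] by blast
  have "envelope_cell (supp f) \<kappa> \<alpha> \<beta> j \<in> Pcal_m (k + m - 1)"
    if "supp f \<in> Pcal_m m" "j < \<kappa>" for m j
  proof -
    have "envelope_cell (supp f) \<kappa> \<alpha> \<beta> j \<in> Pcal_m (m + \<kappa> - 1)"
      using envelope_cell_in_Pcal_m[OF that(1) affine_rep_slopes_inj[OF rep] that(2)]
        affine_rep_piece(3)[OF rep that(2)] by blast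
    moreover have "m + \<kappa> - 1 \<le> k + m - 1"
      using \<open>\<kappa> \<le> k\<close> by linarith
    ultimately show ?thesis
      using Pcal_m_mono by blast
  qed
  then show ?thesis
    using rep affine_rep_unique[OF rep] \<open>\<kappa> \<le> k\<close>
    by (intro exI[of _ \<kappa>] exI[of _ \<alpha>] exI[of _ \<beta>] exI[of _ "envelope_cell (supp f) \<kappa> \<alpha> \<beta>"]) blast
qed
end
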